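(* Let $A\in\mathbb{R}^{m\times n}$ and $x\in\mathbb{R}^n$. Let $L\subseteq\mathrm{supp}(x)$ and $S\subseteq[n]\setminus L$. If there is no circuit $C\subseteq\mathrm{supp}(x)$ with $C\cap S\ne\emptyset$, then \[\|x_S\|_\infty\le\kappa_A\min_{z\in\ker(A)+x}\|z_{[n]\setminus\operatorname{cl}(L)}\|_1.\]
   Context: An elementary vector of $\ker(A)$ is a nonzero $g\in\ker(A)$ with inclusion-minimal support among nonzero vectors of $\ker(A)$; a circuit is the support of an elementary vector (equivalently, a circuit of the linear matroid of the columns of $A$). The circuit imbalance is $\kappa_A=\max\{|g_i|/|g_j|: g \text{ elementary},\ i,j\in\mathrm{supp}(g)\}$. For $S\subseteq[n]$, $\operatorname{rk}(S)=\operatorname{rk}(A_S)$ where $A_S$ is the column submatrix, and $\operatorname{cl}(S)=\{i\in[n]:\operatorname{rk}(S\cup\{i\})=\operatorname{rk}(S)\}$. $x_S$ is the restriction of $x$ to coordinates in $S$. *)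

theory Defs
  imports "HOL-Analysis.Analysis"
begin

text \<open>A real m x n matrix is \<open>A :: real^'n^'m\<close>; the column index set [n] is \<open>UNIV :: 'n set\<close>.\<close>

definition supp :: "real^'n \<Rightarrow> 'n set" where
  "supp g = {i. g $ i \<noteq> 0}"

definition kerA :: "real^'n^'m \<Rightarrow> (real^'n) set" where
  "kerA A = {g. A *v g = 0}"

definition elementary :: "real^'n^'m \<Rightarrow> real^'n \<Rightarrow> bool" where
  "elementary A g \<longleftrightarrow> g \<in> kerA A \<and> g \<noteq> 0 \<and>
     (\<forall>h \<in> kerA A. h \<noteq> 0 \<longrightarrow> supp h \<subseteq> supp g \<longrightarrow> supp h = supp g)"

definition circuit :: "real^'n^'m \<Rightarrow> 'n set \<Rightarrow> bool" where
  "circuit A C \<longleftrightarrow> (\<exists>g. elementary A g \<and> supp g = C)"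

text \<open>Circuit imbalance; the ratio set always contains 1 (take i = j) when an elementary
  vector exists; by convention \<open>\<kappa>_A = 1\<close> if \<open>ker A = {0}\<close>.\<close>
definition kappa :: "real^'n^'m \<Rightarrow> real" where
  "kappa A = Sup (insert 1 {\<bar>g $ i\<bar> / \<bar>g $ j\<bar> | g i j.
       elementary A g \<and> i \<in> supp g \<and> j \<in> supp g})"

definition rk :: "real^'n^'m \<Rightarrow> 'n set \<Rightarrow> nat" where
  "rk A S = dim ((\<lambda>i. column i A) ` S)"

definition cl :: "real^'n^'m \<Rightarrow> 'n set \<Rightarrow> 'n set" where
  "cl A S = {i. rk A (insert i S) = rk A S}"

definition norm_inf_on :: "'n set \<Rightarrow> real^'n \<Rightarrow> real" where
  "norm_inf_on S x = Sup (insert 0 ((\<lambda>i. \<bar>x $ i\<bar>) ` S))"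

definition norm1_on :: "'n set \<Rightarrow> real^'n \<Rightarrow> real" where
  "norm1_on T z = (\<Sum>i\<in>T. \<bar>z $ i\<bar>)"

end

theory Submission
  imports Defs
begin

(* Fix i \<in> S with x_i \<noteq> 0 and z = h + x with h \<in> ker A. As no circuit inside supp x
  contains i, column i is not spanned by the other columns of supp x, and a fortiori not by
  those of cl L \<union> supp x minus i (recall L \<subseteq> supp x - {i}). Hence i \<notin> cl L, and every circuit
  through i meets W = [n] - (cl L \<union> supp x). Decomposing h conformally into elementary vectors g,
  each satisfying |g_i| \<le> \<kappa> |g_j| for some j \<in> W, yields |h_i| \<le> \<kappa> \<parallel>h_W\<parallel>_1 = \<kappa> \<parallel>z_W\<parallel>_1, so
  |x_i| \<le> |z_i| + |h_i| \<le> \<kappa> \<parallel>z_([n] - cl L)\<parallel>_1 because \<kappa> \<ge> 1. *)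

lemma abs_add_eq_add_abs_if_mult_nonneg:
  fixes x y :: "'a :: linordered_idom"
  assumes "0 \<le> x * y"
  shows "\<bar>x + y\<bar> = \<bar>x\<bar> + \<bar>y\<bar>"
  using assms by (auto simp: zero_le_mult_iff)

lemma sign_preserving_step:
  fixes a b t :: real
  assumes t: "0 < t" and le: "0 < a * b \<Longrightarrow> t \<le> a / b" and b0: "a = 0 \<Longrightarrow> b = 0"
  shows "0 \<le> (a - t * b) * a" and "0 \<le> a * b \<Longrightarrow> \<bar>a\<bar> = \<bar>a - t * b\<bar> + t * \<bar>b\<bar>"
proof -
  consider "a * b = 0" | "a * b < 0" | "0 < a * b" by linarith
  then have "0 \<le> (a - t * b) * a \<and> (0 \<le> a * b \<longrightarrow> \<bar>a\<bar> = \<bar>a - t * b\<bar> + t * \<bar>b\<bar>)"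
  proof cases
    case 1
    then have "b = 0" using b0 by auto
    then show ?thesis by simp
  next
    case 2
    have "(a - t * b) * a = a * a - t * (a * b)" by (simp add: algebra_simps)
    moreover have "t * (a * b) < 0" using t 2 by (rule mult_pos_neg)
    ultimately have "0 \<le> (a - t * b) * a" using zero_le_square[of a] by linarith
    then show ?thesis using 2 by simp
  next
    case 3
    then have "t * b * b \<le> a * b"
      using le by (simp add: le_divide_eq split: if_splits)
    then have ab: "0 \<le> (a - t * b) * b" by (simp add: algebra_simps)
    then have "0 \<le> (a - t * b) * a" using 3 by (auto simp: zero_le_mult_iff zero_less_mult_iff)
    moreover have "0 \<le> (a - t * b) * (t * b)"
      using mult_nonneg_nonneg[OF less_imp_le[OF t] ab] by (simp add: ac_simps)
    then have "\<bar>(a - t * b) + t * b\<bar> = \<bar>a - t * b\<bar> + \<bar>t * b\<bar>"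
      by (rule abs_add_eq_add_abs_if_mult_nonneg)
    then have "\<bar>a\<bar> = \<bar>a - t * b\<bar> + t * \<bar>b\<bar>"
      using t by (simp add: abs_mult)
    ultimately show ?thesis by simp
  qed
  then show "0 \<le> (a - t * b) * a" and "0 \<le> a * b \<Longrightarrow> \<bar>a\<bar> = \<bar>a - t * b\<bar> + t * \<bar>b\<bar>"
    by auto
qed

lemma kerA_diff: "g \<in> kerA A \<Longrightarrow> h \<in> kerA A \<Longrightarrow> g - h \<in> kerA A"
  by (simp add: kerA_def matrix_vector_mult_diff_distrib)

lemma kerA_scaleR: "g \<in> kerA A \<Longrightarrow> c *\<^sub>R g \<in> kerA A"
  by (simp add: kerA_def matrix_vector_mult_scaleR)

lemma supp_reducing_step:
  fixes q h :: "real^'n"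
  assumes supp: "supp h \<subseteq> supp q" and k: "0 < q$k * h$k"
  obtains t where "0 < t" and "supp (q - t *\<^sub>R h) \<subset> supp q"
    and "\<forall>j. 0 \<le> (q - t *\<^sub>R h)$j * q$j"
    and "\<forall>j. 0 \<le> q$j * h$j \<longrightarrow> \<bar>q$j\<bar> = \<bar>(q - t *\<^sub>R h)$j\<bar> + t * \<bar>h$j\<bar>"
proof -
  define J where "J = {j. 0 < q$j * h$j}"
  define t where "t = Min ((\<lambda>j. q$j / h$j) ` J)"
  have J: "finite J" "k \<in> J" using k by (auto simp: J_def)
  then obtain j0 where j0: "j0 \<in> J" "t = q$j0 / h$j0"
    unfolding t_def using Min_in[of "(\<lambda>j. q$j / h$j) ` J"] by blast
  have t_le: "t \<le> q$j / h$j" if "j \<in> J" for j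
    unfolding t_def using J that by (intro Min_le) auto
  have t: "0 < t" using j0 by (simp add: J_def zero_less_divide_iff zero_less_mult_iff)
  have h0: "h$j = 0" if "q$j = 0" for j using supp that by (auto simp: supp_def)
  note coord = sign_preserving_step[OF t t_le[unfolded J_def, simplified] h0]
  have "q$j0 \<noteq> 0" "(q - t *\<^sub>R h)$j0 = 0" using j0 by (auto simp: J_def)
  moreover have "supp (q - t *\<^sub>R h) \<subseteq> supp q" using h0 by (auto simp: supp_def)
  ultimately have "supp (q - t *\<^sub>R h) \<subset> supp q" by (auto simp: supp_def)
  with t coord show ?thesis by (intro that) auto
qed

definition conformal :: "real^'n \<Rightarrow> real^'n \<Rightarrow> bool" where
  "conformal g q \<longleftrightarrow> supp g \<subseteq> supp q \<and> (\<forall>j. 0 \<le> g$j * q$j)"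

lemma conformal_refl: "conformal q q"
  by (simp add: conformal_def)

lemma conformal_trans:
  assumes "conformal g h" and "conformal h q"
  shows "conformal g q"
  unfolding conformal_def
proof (intro conjI allI)
  show "supp g \<subseteq> supp q" using assms by (auto simp: conformal_def)
  fix j
  have "0 \<le> g$j * h$j" "0 \<le> h$j * q$j" using assms by (auto simp: conformal_def)
  moreover have "h$j = 0 \<Longrightarrow> g$j = 0" using assms(1) by (auto simp: conformal_def supp_def)
  ultimately show "0 \<le> g$j * q$j" by (auto simp: zero_le_mult_iff)
qed

lemma obtain_nonzero_component:
  fixes v :: "real^'n"
  assumes "v \<noteq> 0"
  obtains k where "v$k \<noteq> 0"
  using assms by (metis vec_eq_iff zero_index)

lemma ex_conformal_elementary:
  assumes "q \<in> kerA A" and "q \<noteq> 0"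
  shows "\<exists>g. elementary A g \<and> conformal g q"
  using assms
proof (induction "card (supp q)" arbitrary: q rule: less_induct)
  case less
  show ?case
  proof (cases "elementary A q")
    case True
    then show ?thesis using conformal_refl by blast
  next
    case False
    then obtain h where h: "h \<in> kerA A" "h \<noteq> 0" "supp h \<subset> supp q"
      using less.prems unfolding elementary_def by blast
    obtain k where hk: "h$k \<noteq> 0" using h(2) by (rule obtain_nonzero_component)
    then have qk: "q$k \<noteq> 0" using h(3) by (auto simp: supp_def)
    define h' where "h' = sgn (q$k * h$k) *\<^sub>R h"
    have "q$k * h$k \<noteq> 0" using hk qk by simp
    moreover have "q$k * h'$k = \<bar>q$k * h$k\<bar>" by (simp add: h'_def abs_sgn ac_simps)
    ultimately have h': "supp h' = supp h" "0 < q$k * h'$k"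
      by (auto simp: h'_def supp_def)
    have "h' \<in> kerA A" unfolding h'_def using h(1) by (rule kerA_scaleR)
    have "supp h' \<subseteq> supp q" using h'(1) h(3) by blast
    obtain t where t: "0 < t" "supp (q - t *\<^sub>R h') \<subset> supp q"
      "\<forall>j. 0 \<le> (q - t *\<^sub>R h')$j * q$j"
      "\<forall>j. 0 \<le> q$j * h'$j \<longrightarrow> \<bar>q$j\<bar> = \<bar>(q - t *\<^sub>R h')$j\<bar> + t * \<bar>h'$j\<bar>"
      by (rule supp_reducing_step[OF \<open>supp h' \<subseteq> supp q\<close> h'(2)])
    define q' where "q' = q - t *\<^sub>R h'"
    have ker: "q' \<in> kerA A"
      unfolding q'_def using less.prems(1) \<open>h' \<in> kerA A\<close> by (intro kerA_diff kerA_scaleR)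
    obtain m where "m \<in> supp q" "m \<notin> supp h'" using h(3) h'(1) by blast
    then have "q'$m \<noteq> 0" by (simp add: q'_def supp_def)
    then have nz: "q' \<noteq> 0" by auto
    have card: "card (supp q') < card (supp q)"
      using t(2) unfolding q'_def by (simp add: psubset_card_mono)
    obtain g where "elementary A g" "conformal g q'"
      using less.hyps[OF card ker nz] by blast
    moreover have "conformal q' q" using t by (auto simp: conformal_def q'_def)
    ultimately show ?thesis using conformal_trans by blast
  qed
qed

(* The conformal circuit decomposition q = \<Sum>_k t_k g_k, |q_j| = \<Sum>_k t_k |g_k j|, in induction form. *)
lemma kerA_conformal_induct [consumes 1, case_names zero step]:
  assumes "q \<in> kerA A"
    and zero: "P 0"
    and step: "\<And>q g t. elementary A g \<Longrightarrow> 0 < t \<Longrightarrow>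
      (\<And>j. \<bar>q$j\<bar> = \<bar>(q - t *\<^sub>R g)$j\<bar> + t * \<bar>g$j\<bar>) \<Longrightarrow> P (q - t *\<^sub>R g) \<Longrightarrow> P q"
  shows "P q"
  using assms(1)
proof (induction "card (supp q)" arbitrary: q rule: less_induct)
  case less
  show ?case
  proof (cases "q = 0")
    case True
    then show ?thesis using zero by simp
  next
    case False
    then obtain g where g: "elementary A g" "conformal g q"
      using less.prems ex_conformal_elementary by blast
    have "g \<noteq> 0" using g(1) by (simp add: elementary_def)
    then obtain k where gk: "g$k \<noteq> 0" by (rule obtain_nonzero_component)
    have conf: "supp g \<subseteq> supp q" "\<And>j. 0 \<le> q$j * g$j"
      using g(2) by (auto simp: conformal_def mult.commute)
    then have "0 < q$k * g$k" using gk by (auto simp: supp_def less_le)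
    then obtain t where t: "0 < t" "supp (q - t *\<^sub>R g) \<subset> supp q"
      "\<forall>j. 0 \<le> (q - t *\<^sub>R g)$j * q$j"
      "\<forall>j. 0 \<le> q$j * g$j \<longrightarrow> \<bar>q$j\<bar> = \<bar>(q - t *\<^sub>R g)$j\<bar> + t * \<bar>g$j\<bar>"
      by (rule supp_reducing_step[OF conf(1)])
    have "card (supp (q - t *\<^sub>R g)) < card (supp q)"
      using t(2) by (simp add: psubset_card_mono)
    moreover have "q - t *\<^sub>R g \<in> kerA A"
      using less.prems g(1) by (intro kerA_diff kerA_scaleR) (auto simp: elementary_def)
    ultimately have "P (q - t *\<^sub>R g)" by (rule less.hyps)
    then show ?thesis using step g(1) t(1) t(4) conf(2) by blast
  qed
qed

lemma elementary_same_supp_scaleR: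
  assumes g: "elementary A g" and g': "elementary A g'" and eq: "supp g = supp g'"
  shows "\<exists>c. g' = c *\<^sub>R g"
proof -
  have "g \<noteq> 0" using g by (simp add: elementary_def)
  then obtain j where gj: "g$j \<noteq> 0" by (rule obtain_nonzero_component)
  define d where "d = g' - (g'$j / g$j) *\<^sub>R g"
  have ker: "d \<in> kerA A" using g g' unfolding d_def elementary_def by (intro kerA_diff kerA_scaleR) auto
  have same_zeros: "g$i = 0 \<longleftrightarrow> g'$i = 0" for i
    using eq unfolding supp_def set_eq_iff by simp
  then have "supp d \<subseteq> supp g'" by (auto simp: d_def supp_def)
  moreover have "j \<notin> supp d" "j \<in> supp g'" using gj same_zeros by (simp_all add: d_def supp_def)
  ultimately have "d = 0" using ker g' unfolding elementary_def by blast
  then show ?thesis by (auto simp: d_def)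
qed

lemma bdd_above_elementary_ratios:
  "bdd_above {\<bar>g$i\<bar> / \<bar>g$j\<bar> | g i j. elementary A g \<and> i \<in> supp g \<and> j \<in> supp g}"
proof -
  define rep where "rep C = (SOME g. elementary A g \<and> supp g = C)" for C
  have ratio_rep: "\<bar>g$i\<bar> / \<bar>g$j\<bar> = \<bar>rep (supp g) $ i\<bar> / \<bar>rep (supp g) $ j\<bar>"
    if g: "elementary A g" for g i j
  proof -
    have rep: "elementary A (rep (supp g)) \<and> supp (rep (supp g)) = supp g"
      using someI[of "\<lambda>g'. elementary A g' \<and> supp g' = supp g" g] g unfolding rep_def by blast
    then obtain c where c: "g = c *\<^sub>R rep (supp g)"
      using elementary_same_supp_scaleR[of A "rep (supp g)" g] rep g by blast
    then have "c \<noteq> 0" using g by (auto simp: elementary_def)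
    then show ?thesis by (subst (1 2) c) (simp add: abs_mult)
  qed
  have "{\<bar>g$i\<bar> / \<bar>g$j\<bar> | g i j. elementary A g \<and> i \<in> supp g \<and> j \<in> supp g}
      \<subseteq> (\<lambda>(C, i, j). \<bar>rep C $ i\<bar> / \<bar>rep C $ j\<bar>) ` UNIV"
  proof
    fix r assume "r \<in> {\<bar>g$i\<bar> / \<bar>g$j\<bar> | g i j. elementary A g \<and> i \<in> supp g \<and> j \<in> supp g}"
    then obtain g i j where "elementary A g" "r = \<bar>g$i\<bar> / \<bar>g$j\<bar>" by blast
    then show "r \<in> (\<lambda>(C, i, j). \<bar>rep C $ i\<bar> / \<bar>rep C $ j\<bar>) ` UNIV"
      by (intro image_eqI[where x = "(supp g, i, j)"]) (simp_all add: ratio_rep)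
  qed
  then show ?thesis by (rule bdd_above_mono[OF bdd_above_finite, rotated]) simp
qed

lemma elementary_abs_le_kappa:
  assumes "elementary A g" and "i \<in> supp g" and "j \<in> supp g"
  shows "\<bar>g$i\<bar> \<le> kappa A * \<bar>g$j\<bar>"
proof -
  have "\<bar>g$i\<bar> / \<bar>g$j\<bar> \<le> kappa A"
    unfolding kappa_def using assms bdd_above_elementary_ratios by (intro cSup_upper) auto
  moreover have "0 < \<bar>g$j\<bar>" using assms(3) by (simp add: supp_def)
  ultimately show ?thesis by (simp add: pos_divide_le_eq)
qed

lemma one_le_kappa: "1 \<le> kappa A"
  unfolding kappa_def using bdd_above_elementary_ratios by (intro cSup_upper) auto

lemma kerA_abs_le_kappa_sum:
  assumes meets: "\<And>g. elementary A g \<Longrightarrow> i \<in> supp g \<Longrightarrow> supp g \<inter> W \<noteq> {}"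
    and "q \<in> kerA A"
  shows "\<bar>q$i\<bar> \<le> kappa A * (\<Sum>j\<in>W. \<bar>q$j\<bar>)"
  using assms(2)
proof (induction rule: kerA_conformal_induct)
  case zero
  show ?case by simp
next
  case (step q g t)
  have g_bound: "\<bar>g$i\<bar> \<le> kappa A * (\<Sum>j\<in>W. \<bar>g$j\<bar>)"
  proof (cases "i \<in> supp g")
    case True
    then obtain j where j: "j \<in> supp g" "j \<in> W" using meets[OF step(1)] by blast
    then have "\<bar>g$i\<bar> \<le> kappa A * \<bar>g$j\<bar>" using elementary_abs_le_kappa step(1) True by blast
    also have "\<dots> \<le> kappa A * (\<Sum>j\<in>W. \<bar>g$j\<bar>)"
      using one_le_kappa[of A] j(2) by (intro mult_left_mono member_le_sum) auto
    finally show ?thesis .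
  next
    case False
    then show ?thesis using one_le_kappa[of A] by (simp add: supp_def sum_nonneg)
  qed
  have "\<bar>q$i\<bar> = \<bar>(q - t *\<^sub>R g)$i\<bar> + t * \<bar>g$i\<bar>" by (rule step(3))
  also have "\<dots> \<le> kappa A * (\<Sum>j\<in>W. \<bar>(q - t *\<^sub>R g)$j\<bar>) + t * (kappa A * (\<Sum>j\<in>W. \<bar>g$j\<bar>))"
    using step.IH g_bound step(2) by (intro add_mono mult_left_mono) auto
  also have "\<dots> = kappa A * (\<Sum>j\<in>W. \<bar>q$j\<bar>)"
    by (simp add: step(3) sum.distrib sum_distrib_left algebra_simps)
  finally show ?case .
qed

lemma ex_elementary_through:
  assumes "v \<in> kerA A" and "v$i \<noteq> 0"
  shows "\<exists>g. elementary A g \<and> i \<in> supp g \<and> supp g \<subseteq> supp v"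
  using assms
proof (induction rule: kerA_conformal_induct)
  case zero
  then show ?case by simp
next
  case (step q g t)
  have "g$j = 0 \<and> (q - t *\<^sub>R g)$j = 0" if "q$j = 0" for j
  proof -
    have "\<bar>(q - t *\<^sub>R g)$j\<bar> + t * \<bar>g$j\<bar> = 0" using step(3)[of j] that by simp
    then show ?thesis using step(2) by (simp add: add_nonneg_eq_0_iff)
  qed
  then have "supp g \<subseteq> supp q" "supp (q - t *\<^sub>R g) \<subseteq> supp q"
    by (auto simp: supp_def)
  show ?case
  proof (cases "g$i = 0")
    case True
    then have "(q - t *\<^sub>R g)$i \<noteq> 0" using step.prems by simp
    then show ?thesis using step.IH \<open>supp (q - t *\<^sub>R g) \<subseteq> supp q\<close> by blast
  next
    case False
    then show ?thesis using step(1) \<open>supp g \<subseteq> supp q\<close> by (auto simp: supp_def)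
  qed
qed

lemma kerA_iff_sum_columns: "g \<in> kerA A \<longleftrightarrow> (\<Sum>j\<in>UNIV. g$j *\<^sub>R column j A) = 0"
  by (simp add: kerA_def matrix_mult_sum scalar_mult_eq_scaleR)

lemma span_image_eq_sum:
  fixes f :: "'a \<Rightarrow> 'b::real_vector"
  assumes "finite L" and "v \<in> span (f ` L)"
  shows "\<exists>c. v = (\<Sum>l\<in>L. c l *\<^sub>R f l)"
  using assms(2)
proof (induction rule: span_induct_alt)
  case base
  show ?case by (intro exI[of _ "\<lambda>_. 0"]) simp
next
  case (step c x y)
  then obtain l c' where l: "l \<in> L" "x = f l" and y: "y = (\<Sum>l\<in>L. c' l *\<^sub>R f l)" by blast
  have "(\<Sum>l'\<in>L. (if l' = l then c else 0) *\<^sub>R f l') = c *\<^sub>R f l"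
    using assms(1) l(1) by (simp add: sum.remove)
  then show ?case
    by (intro exI[of _ "\<lambda>l'. c' l' + (if l' = l then c else 0)"])
      (simp add: y l(2) scaleR_add_left sum.distrib)
qed

lemma column_in_span_if_kerA:
  assumes "v \<in> kerA A" and vi: "v$i \<noteq> 0"
  shows "column i A \<in> span ((\<lambda>j. column j A) ` (supp v - {i}))"
proof -
  have i: "i \<in> supp v" using vi by (simp add: supp_def)
  have "0 = (\<Sum>j\<in>UNIV. v$j *\<^sub>R column j A)" using assms(1) by (simp add: kerA_iff_sum_columns)
  also have "\<dots> = (\<Sum>j\<in>supp v. v$j *\<^sub>R column j A)"
    by (rule sum.mono_neutral_right) (auto simp: supp_def)
  also have "\<dots> = v$i *\<^sub>R column i A + (\<Sum>j\<in>supp v - {i}. v$j *\<^sub>R column j A)"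
    using i by (simp add: sum.remove)
  finally have "v$i *\<^sub>R column i A = - (\<Sum>j\<in>supp v - {i}. v$j *\<^sub>R column j A)"
    by (simp add: eq_neg_iff_add_eq_0)
  then have "column i A = inverse (v$i) *\<^sub>R - (\<Sum>j\<in>supp v - {i}. v$j *\<^sub>R column j A)"
    using vi by (metis left_inverse scaleR_one scaleR_scaleR)
  also have "\<dots> \<in> span ((\<lambda>j. column j A) ` (supp v - {i}))"
    by (intro span_scale span_neg span_sum span_base) auto
  finally show ?thesis .
qed

lemma kerA_vector_if_column_in_span:
  fixes A :: "real^'n^'m"
  assumes iT: "i \<notin> T" and span: "column i A \<in> span ((\<lambda>j. column j A) ` T)"
  shows "\<exists>v\<in>kerA A. v$i \<noteq> 0 \<and> supp v \<subseteq> insert i T"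
proof -
  obtain c where c: "column i A = (\<Sum>l\<in>T. c l *\<^sub>R column l A)"
    using span_image_eq_sum[OF finite span] by blast
  define v :: "real^'n" where "v = (\<chi> l. if l = i then -1 else if l \<in> T then c l else 0)"
  have "(\<Sum>j\<in>UNIV. v$j *\<^sub>R column j A) = (\<Sum>j\<in>insert i T. v$j *\<^sub>R column j A)"
    by (rule sum.mono_neutral_right) (auto simp: v_def)
  also have "\<dots> = v$i *\<^sub>R column i A + (\<Sum>j\<in>T. v$j *\<^sub>R column j A)"
    using iT by simp
  also have "(\<Sum>j\<in>T. v$j *\<^sub>R column j A) = (\<Sum>j\<in>T. c j *\<^sub>R column j A)"
    using iT by (intro sum.cong) (auto simp: v_def)
  finally have "v \<in> kerA A" by (simp add: kerA_iff_sum_columns c v_def)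
  moreover have "v$i \<noteq> 0" "supp v \<subseteq> insert i T" by (auto simp: v_def supp_def)
  ultimately show ?thesis by blast
qed

lemma column_in_span_if_cl:
  assumes "j \<in> cl A L"
  shows "column j A \<in> span ((\<lambda>i. column i A) ` L)"
proof (rule ccontr)
  assume "column j A \<notin> span ((\<lambda>i. column i A) ` L)"
  then have "rk A (insert j L) = rk A L + 1" unfolding rk_def by (simp add: dim_insert)
  then show False using assms unfolding cl_def by simp
qed

lemma column_notin_span_if_no_circuit:
  assumes no_circuit: "\<not> (\<exists>C. circuit A C \<and> C \<subseteq> supp x \<and> i \<in> C)"
    and i: "i \<in> supp x"
  shows "column i A \<notin> span ((\<lambda>j. column j A) ` (supp x - {i}))"
proof
  assume "column i A \<in> span ((\<lambda>j. column j A) ` (supp x - {i}))"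
  then obtain v where v: "v \<in> kerA A" "v$i \<noteq> 0" "supp v \<subseteq> insert i (supp x - {i})"
    using kerA_vector_if_column_in_span[of i "supp x - {i}"] by blast
  then obtain g where g: "elementary A g" "i \<in> supp g" "supp g \<subseteq> supp v"
    using ex_elementary_through by blast
  have "supp g \<subseteq> supp x" using g(3) v(3) i by blast
  then have "circuit A (supp g) \<and> supp g \<subseteq> supp x \<and> i \<in> supp g"
    using g(1,2) unfolding circuit_def by blast
  with no_circuit show False by blast
qed

lemma elementary_through_not_subset:
  assumes nspan: "column i A \<notin> span ((\<lambda>j. column j A) ` (U - {i}))"
    and L: "L \<subseteq> U - {i}" and g: "elementary A g" and i: "i \<in> supp g"
  shows "\<not> supp g \<subseteq> cl A L \<union> U"
proof
  assume sub: "supp g \<subseteq> cl A L \<union> U"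
  let ?V = "span ((\<lambda>j. column j A) ` (U - {i}))"
  have "(\<lambda>j. column j A) ` (supp g - {i}) \<subseteq> ?V"
  proof (rule image_subsetI)
    fix j assume j: "j \<in> supp g - {i}"
    show "column j A \<in> ?V"
    proof (cases "j \<in> cl A L")
      case True
      then show ?thesis using column_in_span_if_cl span_mono[OF image_mono[OF L]] by blast
    next
      case False
      then have "j \<in> U - {i}" using j sub by blast
      then show ?thesis by (intro span_base imageI)
    qed
  qed
  then have "span ((\<lambda>j. column j A) ` (supp g - {i})) \<subseteq> ?V"
    by (rule span_minimal) (rule subspace_span)
  moreover have "column i A \<in> span ((\<lambda>j. column j A) ` (supp g - {i}))"
    using g i by (intro column_in_span_if_kerA) (auto simp: elementary_def supp_def)
  ultimately show False using nspan by blast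
qed

lemma abs_le_kappa_norm1_outside_cl:
  assumes L: "L \<subseteq> supp x" and iL: "i \<notin> L"
    and no_circuit: "\<not> (\<exists>C. circuit A C \<and> C \<subseteq> supp x \<and> i \<in> C)"
    and h: "h \<in> kerA A"
  shows "\<bar>x$i\<bar> \<le> kappa A * norm1_on (UNIV - cl A L) (h + x)"
proof (cases "i \<in> supp x")
  case False
  then show ?thesis using one_le_kappa[of A] by (simp add: supp_def norm1_on_def sum_nonneg)
next
  case True
  define W where "W = UNIV - cl A L - supp x"
  have nspan: "column i A \<notin> span ((\<lambda>j. column j A) ` (supp x - {i}))"
    using no_circuit True by (rule column_notin_span_if_no_circuit)
  have L': "L \<subseteq> supp x - {i}" using L iL by blast
  have icl: "i \<notin> cl A L"
    using column_in_span_if_cl span_mono[OF image_mono[OF L']] nspan by blast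
  have "\<bar>h$i\<bar> \<le> kappa A * (\<Sum>j\<in>W. \<bar>h$j\<bar>)"
    using elementary_through_not_subset[OF nspan L'] h
    by (intro kerA_abs_le_kappa_sum) (auto simp: W_def)
  also have "(\<Sum>j\<in>W. \<bar>h$j\<bar>) = (\<Sum>j\<in>W. \<bar>(h + x)$j\<bar>)"
    by (intro sum.cong) (auto simp: W_def supp_def)
  finally have h_bound: "\<bar>h$i\<bar> \<le> kappa A * (\<Sum>j\<in>W. \<bar>(h + x)$j\<bar>)" .
  have "\<bar>x$i\<bar> \<le> \<bar>(h + x)$i\<bar> + \<bar>h$i\<bar>" by simp
  also have "\<dots> \<le> kappa A * \<bar>(h + x)$i\<bar> + kappa A * (\<Sum>j\<in>W. \<bar>(h + x)$j\<bar>)"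
    using h_bound one_le_kappa[of A] mult_right_mono[of 1 "kappa A" "\<bar>(h + x)$i\<bar>"]
    by (intro add_mono) auto
  also have "\<dots> = kappa A * (\<Sum>j\<in>insert i W. \<bar>(h + x)$j\<bar>)"
    using True by (simp add: W_def distrib_left)
  also have "\<dots> \<le> kappa A * norm1_on (UNIV - cl A L) (h + x)"
    unfolding norm1_on_def using icl one_le_kappa[of A]
    by (intro mult_left_mono sum_mono2) (auto simp: W_def)
  finally show ?thesis .
qed

lemma norm_inf_on_le:
  assumes "\<And>i. i \<in> S \<Longrightarrow> \<bar>x$i\<bar> \<le> c" and "0 \<le> c"
  shows "norm_inf_on S x \<le> c"
  unfolding norm_inf_on_def using assms by (intro cSup_least) auto

theorem lemma2p7:
  fixes A :: "real^'n^'m" and x :: "real^'n" and L S :: "'n set"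
  assumes "L \<subseteq> supp x"
    and "S \<subseteq> UNIV - L"
    and "\<not> (\<exists>C. circuit A C \<and> C \<subseteq> supp x \<and> C \<inter> S \<noteq> {})"
  shows "norm_inf_on S x \<le>
     kappa A * Inf ((\<lambda>z. norm1_on (UNIV - cl A L) z) ` {h + x | h. h \<in> kerA A})"
proof -
  let ?Y = "(\<lambda>z. norm1_on (UNIV - cl A L) z) ` {h + x | h. h \<in> kerA A}"
  have kappa_pos: "0 < kappa A" using one_le_kappa[of A] by simp
  have "norm_inf_on S x / kappa A \<le> y" if y: "y \<in> ?Y" for y
  proof -
    obtain h where h: "h \<in> kerA A" "y = norm1_on (UNIV - cl A L) (h + x)" using y by blast
    have "norm_inf_on S x \<le> kappa A * y"
    proof (rule norm_inf_on_le)
      show "\<bar>x$i\<bar> \<le> kappa A * y" if "i \<in> S" for i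
        unfolding h(2) using assms that
        by (intro abs_le_kappa_norm1_outside_cl h(1)) blast+
      show "0 \<le> kappa A * y" using kappa_pos by (simp add: h(2) norm1_on_def sum_nonneg)
    qed
    then show ?thesis using kappa_pos by (simp add: divide_le_eq mult.commute)
  qed
  moreover have "0 \<in> kerA A" by (simp add: kerA_def)
  then have "?Y \<noteq> {}" by blast
  ultimately have "norm_inf_on S x / kappa A \<le> Inf ?Y" by (intro cInf_greatest) auto
  then show ?thesis using kappa_pos by (simp add: divide_le_eq mult.commute)
qed

end
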